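(* Every vertex of a friendship digraph has outdegree at least $2$.
   Context: All digraphs are finite and have neither loops nor parallel arcs (a pair of opposite arcs $(u,v)$ and $(v,u)$ is allowed). A friendship digraph is a nontrivial digraph (at least two vertices) in which any two distinct vertices have exactly one common out-neighbor. *)

theory Defs
  imports Main
begin

text \<open>A digraph is given by a finite vertex set V and an arc set A of ordered pairs
  of vertices, without loops. Parallel arcs cannot occur (A is a set); opposite
  arcs (u,v),(v,u) are allowed.\<close>

definition digraph :: "'a set \<Rightarrow> ('a \<times> 'a) set \<Rightarrow> bool" where
  "digraph V A \<longleftrightarrow> finite V \<and> A \<subseteq> V \<times> V \<and> (\<forall>v. (v, v) \<notin> A)"

definition out_nbrs :: "'a set \<Rightarrow> ('a \<times> 'a) set \<Rightarrow> 'a \<Rightarrow> 'a set" where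
  "out_nbrs V A u = {w \<in> V. (u, w) \<in> A}"

definition outdegree :: "'a set \<Rightarrow> ('a \<times> 'a) set \<Rightarrow> 'a \<Rightarrow> nat" where
  "outdegree V A u = card (out_nbrs V A u)"

definition friendship_digraph :: "'a set \<Rightarrow> ('a \<times> 'a) set \<Rightarrow> bool" where
  "friendship_digraph V A \<longleftrightarrow> digraph V A \<and> card V \<ge> 2 \<and>
     (\<forall>u\<in>V. \<forall>v\<in>V. u \<noteq> v \<longrightarrow> (\<exists>!w. w \<in> out_nbrs V A u \<inter> out_nbrs V A v))"

end

theory Submission
  imports Defs
begin

text \<open>Pick any vertex u other than v; the common out-neighbour w of u and v is an
  out-neighbour of v, and w differs from v since there are no loops. The common
  out-neighbour x of v and w is again an out-neighbour of v, and x differs from w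
  because it is an out-neighbour of w.\<close>

lemma out_nbr_neq:
  assumes "digraph V A" and "w \<in> out_nbrs V A u"
  shows "w \<noteq> u"
  using assms unfolding digraph_def out_nbrs_def by auto

lemma out_nbr_in_vertices:
  assumes "w \<in> out_nbrs V A u"
  shows "w \<in> V"
  using assms unfolding out_nbrs_def by simp

lemma out_nbr_source_in_vertices:
  assumes "digraph V A" and "w \<in> out_nbrs V A u"
  shows "u \<in> V"
  using assms unfolding digraph_def out_nbrs_def by auto

lemma finite_out_nbrs:
  assumes "digraph V A"
  shows "finite (out_nbrs V A u)"
  using assms unfolding digraph_def out_nbrs_def by simp

lemma card_ge_2_obtain_other:
  assumes "card S \<ge> 2" and "v \<in> S"
  obtains u where "u \<in> S" and "u \<noteq> v"
proof -
  have "S \<noteq> {v}" using assms(1) by auto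
  with assms(2) show ?thesis using that by blast
qed

lemma friendship_digraphD:
  assumes "friendship_digraph V A"
  shows "digraph V A" and "card V \<ge> 2"
  using assms unfolding friendship_digraph_def by simp_all

lemma friendship_common_out_nbr:
  assumes "friendship_digraph V A" and "u \<in> V" and "w \<in> V" and "u \<noteq> w"
  obtains x where "x \<in> out_nbrs V A u" and "x \<in> out_nbrs V A w"
proof -
  have "\<exists>!x. x \<in> out_nbrs V A u \<inter> out_nbrs V A w"
    using assms unfolding friendship_digraph_def by simp
  then show ?thesis using that by auto
qed

lemma friendship_obtain_out_nbr:
  assumes fd: "friendship_digraph V A" and v: "v \<in> V"
  obtains w where "w \<in> out_nbrs V A v"
proof -
  obtain u where "u \<in> V" and "u \<noteq> v"
    using card_ge_2_obtain_other[OF friendship_digraphD(2)[OF fd] v] .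
  then obtain w where "w \<in> out_nbrs V A v"
    using friendship_common_out_nbr[OF fd v] by blast
  then show ?thesis by (rule that)
qed

lemma friendship_other_out_nbr:
  assumes fd: "friendship_digraph V A" and w: "w \<in> out_nbrs V A v"
  obtains x where "x \<in> out_nbrs V A v" and "x \<noteq> w"
proof -
  have dg: "digraph V A" using fd by (rule friendship_digraphD)
  have "v \<in> V" using out_nbr_source_in_vertices[OF dg w] .
  moreover have "w \<in> V" using w by (rule out_nbr_in_vertices)
  moreover have "v \<noteq> w" using out_nbr_neq[OF dg w] by simp
  ultimately obtain x where x: "x \<in> out_nbrs V A v" "x \<in> out_nbrs V A w"
    by (rule friendship_common_out_nbr[OF fd])
  have "x \<noteq> w" using out_nbr_neq[OF dg x(2)] .
  with x(1) show ?thesis by (rule that)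
qed

theorem lemma2p1:
  assumes "friendship_digraph V A" and "v \<in> V"
  shows "outdegree V A v \<ge> 2"
proof -
  obtain w where w: "w \<in> out_nbrs V A v"
    using friendship_obtain_out_nbr[OF assms] .
  obtain x where x: "x \<in> out_nbrs V A v" "x \<noteq> w"
    using friendship_other_out_nbr[OF assms(1) w] .
  have "finite (out_nbrs V A v)"
    using finite_out_nbrs[OF friendship_digraphD(1)[OF assms(1)]] .
  then have "card {w, x} \<le> card (out_nbrs V A v)"
    using w x(1) by (intro card_mono) auto
  then show ?thesis
    using x(2) unfolding outdegree_def by simp
qed

end
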